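(* For any $x\in\mathrm{St}(d,r)$, $\|\nabla\mathcal{L}(x)\|_F\le2\|\Lambda(x)\|_F$.
   Context: $\langle A,B\rangle=\mathrm{Tr}(AB^\top)$; $\mathrm{sym}(A)=\frac12(A+A^\top)$, $\mathrm{skew}(A)=\frac12(A-A^\top)$; $\|\cdot\|_F$ Frobenius norm. $\mathrm{St}(d,r)=\{x\in\mathbb{R}^{d\times r}:x^\top x=I_r\}$. $f:\mathbb{R}^{d\times r}\to\mathbb{R}$ is $C^2$, $\mathrm{grad} f(x)=\mathrm{skew}(\nabla f(x)x^\top)x$. For $\lambda>0$, $\Lambda(x)=\mathrm{grad} f(x)+\lambda x(x^\top x-I_r)$. For $\gamma>0$, the merit function is $\mathcal{L}(x)=f(x)-\frac12\langle\mathrm{sym}(x^\top\nabla f(x)),x^\top x-I_r\rangle+\frac\gamma4\|x^\top x-I_r\|_F^2$. *)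

theory Defs
  imports "HOL-Analysis.Analysis"
begin

text \<open>Matrices in R^{d x r} are modelled as real^'r^'d (rows indexed by 'd, columns by 'r).
The inner product on this type is the Frobenius inner product, the norm is the Frobenius norm.\<close>

definition msym :: "real^'n^'n \<Rightarrow> real^'n^'n" where
  "msym A = (1/2) *\<^sub>R (A + transpose A)"

definition mskew :: "real^'n^'n \<Rightarrow> real^'n^'n" where
  "mskew A = (1/2) *\<^sub>R (A - transpose A)"

definition stiefel :: "(real^'r^'d) set" where
  "stiefel = {x. transpose x ** x = mat 1}"

text \<open>Riemannian gradient, given the Euclidean gradient field G of f.\<close>
definition rgrad :: "(real^'r^'d \<Rightarrow> real^'r^'d) \<Rightarrow> real^'r^'d \<Rightarrow> real^'r^'d" where
  "rgrad G x = mskew (G x ** transpose x) ** x"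

definition Lam :: "real \<Rightarrow> (real^'r^'d \<Rightarrow> real^'r^'d) \<Rightarrow> real^'r^'d \<Rightarrow> real^'r^'d" where
  "Lam lam G x = rgrad G x + lam *\<^sub>R (x ** (transpose x ** x - mat 1))"

definition merit :: "real \<Rightarrow> (real^'r^'d \<Rightarrow> real) \<Rightarrow> (real^'r^'d \<Rightarrow> real^'r^'d) \<Rightarrow> real^'r^'d \<Rightarrow> real" where
  "merit gam f G x = f x - (1/2) * (msym (transpose x ** G x) \<bullet> (transpose x ** x - mat 1))
     + (gam / 4) * (norm (transpose x ** x - mat 1))^2"

end

theory Submission
  imports Defs
begin

(* At a point x of the Stiefel manifold the penalty x\<^sup>Tx - I vanishes, and the gradient of the merit
   function reduces to G - x sym(x\<^sup>T G), where G is the Euclidean gradient of f.  Splitting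
   G = xA + P with A = x\<^sup>T G and x\<^sup>T P = 0, this gradient is x skew(A) + P, while
   2\<Lambda>(x) = x (2 skew(A)) + P.  Both are orthogonal sums, since x\<^sup>T x = I makes
   x K \<perp> P and \<parallel>x K\<parallel> = \<parallel>K\<parallel>, so doubling the first summand can only increase the norm. *)

lemma bounded_bilinear_matrix_mult:
  "bounded_bilinear ((**) :: real^'k^'m \<Rightarrow> real^'n^'k \<Rightarrow> real^'n^'m)"
  unfolding bilinear_conv_bounded_bilinear[symmetric] bilinear_def
  by (auto intro!: linearI simp: matrix_add_ldistrib matrix_scalar_ac scalar_matrix_assoc[symmetric])
     (vector matrix_matrix_mult_def sum.distrib field_simps)

lemma bounded_linear_transpose: "bounded_linear (transpose :: real^'n^'m \<Rightarrow> real^'m^'n)"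
  unfolding linear_conv_bounded_linear[symmetric]
  by (auto intro!: linearI simp: transpose_def vec_eq_iff)

lemma bounded_linear_msym: "bounded_linear (msym :: real^'n^'n \<Rightarrow> real^'n^'n)"
  unfolding linear_conv_bounded_linear[symmetric]
  by (auto intro!: linearI simp: msym_def transpose_def vec_eq_iff algebra_simps)

lemma matrix_diff_ldistrib: "(A::'a::ring_1^'k^'m) ** (B - C) = A ** B - A ** C"
  by (simp add: matrix_matrix_mult_def vec_eq_iff sum_subtractf algebra_simps)

lemma matrix_diff_rdistrib: "((A::'a::ring_1^'k^'m) - B) ** (C::'a^'n^'k) = A ** C - B ** C"
  by (simp add: matrix_matrix_mult_def vec_eq_iff sum_subtractf left_diff_distrib)

lemma transpose_msym [simp]: "transpose (msym A) = msym A"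
  by (simp add: msym_def transpose_def vec_eq_iff algebra_simps)

lemma msym_add_mskew: "msym A + mskew A = A"
  by (simp add: msym_def mskew_def vec_eq_iff field_simps)

lemma diff_transpose_eq_mskew: "A - transpose A = 2 *\<^sub>R mskew A"
  by (simp add: mskew_def)

lemma inner_matrix_mult_left:
  "((A::real^'k^'m) ** B) \<bullet> (C::real^'n^'m) = B \<bullet> (transpose A ** C)"
proof -
  have "(A ** B) \<bullet> C = (\<Sum>i\<in>UNIV. \<Sum>j\<in>UNIV. \<Sum>k\<in>UNIV. A$i$k * B$k$j * C$i$j)"
    by (simp add: inner_vec_def matrix_matrix_mult_def sum_distrib_right)
  also have "\<dots> = (\<Sum>i\<in>UNIV. \<Sum>k\<in>UNIV. \<Sum>j\<in>UNIV. A$i$k * B$k$j * C$i$j)"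
    by (intro sum.cong refl sum.swap)
  also have "\<dots> = (\<Sum>k\<in>UNIV. \<Sum>j\<in>UNIV. \<Sum>i\<in>UNIV. A$i$k * B$k$j * C$i$j)"
    by (subst sum.swap) (intro sum.cong refl sum.swap)
  also have "\<dots> = B \<bullet> (transpose A ** C)"
    by (simp add: inner_vec_def matrix_matrix_mult_def transpose_def sum_distrib_left ac_simps)
  finally show ?thesis .
qed

lemma inner_transpose: "transpose (A::real^'n^'m) \<bullet> transpose B = A \<bullet> B"
proof -
  have "transpose A \<bullet> transpose B = (\<Sum>j\<in>UNIV. \<Sum>i\<in>UNIV. A$i$j * B$i$j)"
    by (simp add: inner_vec_def transpose_def)
  also have "\<dots> = A \<bullet> B"
    by (subst sum.swap) (simp add: inner_vec_def)
  finally show ?thesis .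
qed

lemma inner_transpose_mult_add_symmetric:
  fixes S :: "real^'r^'r" and x h :: "real^'r^'d"
  assumes "transpose S = S"
  shows "S \<bullet> (transpose x ** h + transpose h ** x) = 2 * ((x ** S) \<bullet> h)"
proof -
  have left: "S \<bullet> (transpose x ** h) = (x ** S) \<bullet> h"
    by (metis inner_commute inner_matrix_mult_left)
  have "S \<bullet> (transpose h ** x) = transpose S \<bullet> transpose (transpose h ** x)"
    by (simp add: inner_transpose)
  also have "\<dots> = S \<bullet> (transpose x ** h)"
    by (simp add: assms matrix_transpose_mul)
  finally show ?thesis
    by (simp add: inner_add_right left)
qed

lemma merit_has_derivative_stiefel:
  fixes f :: "real^'r^'d \<Rightarrow> real" and G :: "real^'r^'d \<Rightarrow> real^'r^'d"
  assumes f: "(f has_derivative (\<lambda>h. G x \<bullet> h)) (at x)"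
    and G: "(G has_derivative G') (at x)"
    and x: "x \<in> stiefel"
  shows "(merit gam f G has_derivative (\<lambda>h. (G x - x ** msym (transpose x ** G x)) \<bullet> h)) (at x)"
proof -
  define S where "S = msym (transpose x ** G x)"
  define C where "C = (\<lambda>y::real^'r^'d. transpose y ** y - mat 1)"
  have C0: "C x = 0"
    using x by (simp add: C_def stiefel_def)
  have transp: "(transpose has_derivative transpose) (at x)"
    by (rule bounded_linear.has_derivative[OF bounded_linear_transpose has_derivative_ident])
  have dC: "(C has_derivative (\<lambda>h. transpose x ** h + transpose h ** x - 0)) (at x)"
    unfolding C_def
    by (intro has_derivative_diff has_derivative_const
        bounded_bilinear.FDERIV[OF bounded_bilinear_matrix_mult transp has_derivative_ident])
  have dS: "((\<lambda>y. msym (transpose y ** G y)) has_derivative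
      (\<lambda>h. msym (transpose x ** G' h + transpose h ** G x))) (at x)"
    by (intro bounded_linear.has_derivative[OF bounded_linear_msym]
        bounded_bilinear.FDERIV[OF bounded_bilinear_matrix_mult transp G])
  have merit_eq: "merit gam f G = (\<lambda>y. f y - (1/2) * (msym (transpose y ** G y) \<bullet> C y)
      + (gam/4) * (C y \<bullet> C y))"
    by (simp add: fun_eq_iff merit_def C_def power2_norm_eq_inner)
  have "(merit gam f G has_derivative (\<lambda>h. G x \<bullet> h
      - (1/2) * (S \<bullet> (transpose x ** h + transpose h ** x - 0)
                 + msym (transpose x ** G' h + transpose h ** G x) \<bullet> C x)
      + (gam/4) * (C x \<bullet> (transpose x ** h + transpose h ** x - 0)
                   + (transpose x ** h + transpose h ** x - 0) \<bullet> C x))) (at x)"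
    unfolding merit_eq S_def
    by (intro has_derivative_add has_derivative_diff has_derivative_mult_right
        has_derivative_inner f dS dC)
  moreover have "S \<bullet> (transpose x ** h + transpose h ** x) = 2 * ((x ** S) \<bullet> h)" for h
    by (rule inner_transpose_mult_add_symmetric) (simp add: S_def)
  ultimately show ?thesis
    by (simp add: C0 S_def inner_diff_left inner_diff_right inner_commute)
qed

lemma transpose_mult_residual_stiefel:
  "x \<in> stiefel \<Longrightarrow> transpose x ** (M - x ** (transpose x ** M)) = 0"
  by (simp add: stiefel_def matrix_diff_ldistrib matrix_mul_assoc)

lemma diff_mult_msym_eq:
  "M - x ** msym (transpose x ** M) = x ** mskew (transpose x ** M) + (M - x ** (transpose x ** M))"
proof -
  have "x ** (transpose x ** M) = x ** msym (transpose x ** M) + x ** mskew (transpose x ** M)"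
    by (simp add: msym_add_mskew flip: matrix_add_ldistrib)
  then show ?thesis
    by simp
qed

lemma Lam_stiefel:
  assumes "x \<in> stiefel"
  shows "2 *\<^sub>R Lam lam G x = x ** (2 *\<^sub>R mskew (transpose x ** G x)) + (G x - x ** (transpose x ** G x))"
proof -
  have xx: "transpose x ** x = mat 1"
    using assms by (simp add: stiefel_def)
  have "2 *\<^sub>R Lam lam G x = 2 *\<^sub>R (mskew (G x ** transpose x) ** x)"
    by (simp add: Lam_def rgrad_def xx)
  also have "\<dots> = G x ** (transpose x ** x) - x ** (transpose (G x) ** x)"
    by (simp add: mskew_def scalar_matrix_assoc[symmetric] matrix_diff_rdistrib
        matrix_transpose_mul matrix_mul_assoc)
  also have "\<dots> = x ** (transpose x ** G x - transpose (transpose x ** G x)) + (G x - x ** (transpose x ** G x))"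
    by (simp add: xx matrix_diff_ldistrib matrix_transpose_mul)
  finally show ?thesis
    by (simp add: diff_transpose_eq_mskew)
qed

lemma norm_stiefel_mult_add_orth:
  fixes x :: "real^'r^'d" and K :: "real^'r^'r"
  assumes x: "x \<in> stiefel" and orth: "transpose x ** P = 0"
  shows "(norm (x ** K + P))\<^sup>2 = (norm K)\<^sup>2 + (norm P)\<^sup>2"
proof -
  have KK: "(x ** K) \<bullet> (x ** K) = K \<bullet> K"
    using x by (simp add: inner_matrix_mult_left matrix_mul_assoc stiefel_def)
  have KP: "(x ** K) \<bullet> P = 0"
    by (simp add: inner_matrix_mult_left orth)
  have "(x ** K + P) \<bullet> (x ** K + P)
      = (x ** K) \<bullet> (x ** K) + (x ** K) \<bullet> P + (P \<bullet> (x ** K) + P \<bullet> P)"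
    by (simp only: inner_add_left inner_add_right)
  then show ?thesis
    by (simp add: power2_norm_eq_inner KK KP inner_commute[of P "x ** K"])
qed

lemma norm_stiefel_mult_add_mono:
  fixes x :: "real^'r^'d" and K K' :: "real^'r^'r"
  assumes "x \<in> stiefel" "transpose x ** P = 0" "norm K \<le> norm K'"
  shows "norm (x ** K + P) \<le> norm (x ** K' + P)"
proof (rule power2_le_imp_le)
  show "(norm (x ** K + P))\<^sup>2 \<le> (norm (x ** K' + P))\<^sup>2"
    using assms by (simp add: norm_stiefel_mult_add_orth power_mono)
qed simp

theorem lemma12:
  fixes f :: "real^'r^'d \<Rightarrow> real"
    and G :: "real^'r^'d \<Rightarrow> real^'r^'d"
    and H :: "real^'r^'d \<Rightarrow> ((real^'r^'d) \<Rightarrow>\<^sub>L (real^'r^'d))"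
    and lam gam :: real
    and x :: "real^'r^'d"
  assumes f_grad: "\<And>y. (f has_derivative (\<lambda>h. G y \<bullet> h)) (at y)"
    and G_deriv: "\<And>y. (G has_derivative blinfun_apply (H y)) (at y)"
    and H_cont: "continuous_on UNIV H"
    and lam_pos: "lam > 0"
    and gam_pos: "gam > 0"
    and x_St: "x \<in> stiefel"
  shows "\<exists>g. ((merit gam f G) has_derivative (\<lambda>h. g \<bullet> h)) (at x)
             \<and> norm g \<le> 2 * norm (Lam lam G x)"
proof -
  define A where "A = transpose x ** G x"
  define P where "P = G x - x ** A"
  have orth: "transpose x ** P = 0"
    unfolding P_def A_def using x_St by (rule transpose_mult_residual_stiefel)
  have grad_eq: "G x - x ** msym A = x ** mskew A + P"
    unfolding P_def A_def by (rule diff_mult_msym_eq)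
  have Lam_eq: "2 *\<^sub>R Lam lam G x = x ** (2 *\<^sub>R mskew A) + P"
    unfolding P_def A_def using x_St by (rule Lam_stiefel)
  have "norm (x ** mskew A + P) \<le> norm (x ** (2 *\<^sub>R mskew A) + P)"
    using x_St orth by (rule norm_stiefel_mult_add_mono) simp
  then have "norm (G x - x ** msym A) \<le> 2 * norm (Lam lam G x)"
    by (metis grad_eq Lam_eq norm_scaleR abs_numeral)
  moreover have "(merit gam f G has_derivative (\<lambda>h. (G x - x ** msym A) \<bullet> h)) (at x)"
    unfolding A_def using f_grad G_deriv x_St by (rule merit_has_derivative_stiefel)
  ultimately show ?thesis
    by blast
qed

end
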